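(* With $\bar{\sigma}_g^f,\bar{\sigma}_g^o,\bar{\sigma}_c^x\in(0,1)$, $\alpha\ge0$, $U_o\in\mathbb{R}^{n_x\times n_x}$ and \[ A_\delta=\begin{bmatrix}\bar{\sigma}_g^f & \alpha\\ \bar{\sigma}_g^o\bar{\sigma}_g^f & \alpha\bar{\sigma}_g^o+\tfrac14\bar{\sigma}_c^x\|U_o\|\end{bmatrix}, \] the matrix $A_\delta$ is Schur stable ($\rho(A_\delta)<1$) if \[ -1+\bar{\sigma}_g^f+\alpha\bar{\sigma}_g^o+\tfrac14\bar{\sigma}_c^x\|U_o\|<\tfrac14\bar{\sigma}_g^f\bar{\sigma}_c^x\|U_o\|<1. \]
   Context: $\|U_o\|$ is the induced 2-norm, $\rho$ the spectral radius. (In the paper these quantities arise from an LSTM network: $\bar{\sigma}_g^\star=\sigma_g(\|[W_\star u_{\max}\ U_\star\ b_\star]\|_\infty)$, $\bar{\sigma}_c^c=\tanh(\|[W_c u_{\max}\ U_c\ b_c]\|_\infty)$, $\bar{\sigma}_c^x=\tanh(\bar{\sigma}_g^i\bar{\sigma}_c^c/(1-\bar{\sigma}_g^f))$, $\alpha=\tfrac14\|U_f\|\frac{\bar{\sigma}_g^i\bar{\sigma}_c^c}{1-\bar{\sigma}_g^f}+\bar{\sigma}_g^i\|U_c\|+\tfrac14\|U_i\|\bar{\sigma}_c^c$.) *)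

theory Defs
  imports "HOL-Analysis.Analysis"
begin

definition complexify :: "real^'n^'m \<Rightarrow> complex^'n^'m" where
  "complexify A = (\<chi> i j. complex_of_real (A $ i $ j))"

definition spectral_radius :: "real^'n^'n \<Rightarrow> real" where
  "spectral_radius A =
     Max {cmod l | l. \<exists>v::complex^'n. v \<noteq> 0 \<and> complexify A *v v = l *s v}"

definition induced_2norm :: "real^'n^'m \<Rightarrow> real" where
  "induced_2norm U = onorm (\<lambda>x. U *v x)"

end

theory Submission
  imports Defs
begin

text \<open>The eigenvalues of a real \<open>2\<times>2\<close> matrix \<open>A\<close> are the roots of
  \<open>z\<^sup>2 - tr A z + det A\<close>. Both lie in the open unit disc when \<open>det A < 1\<close> and
  \<open>\<bar>tr A\<bar> < 1 + det A\<close> (the Schur-Cohn-Jury conditions): a non-real root has modulus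
  \<open>\<surd>det A\<close>, and the trace condition makes the polynomial positive at \<open>\<plusminus>1\<close> with its
  vertex in \<open>(-1, 1)\<close>, which rules out real roots of modulus \<open>\<ge> 1\<close>. For \<open>A\<^sub>\<delta>\<close>, with
  \<open>k = \<sigma>\<^sub>c\<^sup>x \<parallel>U\<^sub>o\<parallel> / 4\<close>, the determinant is \<open>\<sigma>\<^sub>g\<^sup>f k\<close> and the trace is the nonnegative
  number \<open>\<sigma>\<^sub>g\<^sup>f + \<alpha> \<sigma>\<^sub>g\<^sup>o + k\<close>, so the two hypotheses are exactly these conditions.\<close>

lemma quadratic_root_in_unit_disc:
  fixes l :: complex and T D :: real
  assumes root: "l\<^sup>2 - T * l + D = 0" and "D < 1" and "\<bar>T\<bar> < 1 + D"
  shows "cmod l < 1"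
proof -
  obtain x y where l: "l = Complex x y" by (cases l)
  from root have re: "x\<^sup>2 - y\<^sup>2 - T * x + D = 0" and im: "(2 * x - T) * y = 0"
    by (auto simp: l complex_eq_iff power2_eq_square algebra_simps)
  show ?thesis
  proof (cases "y = 0")
    case False
    with im re have "x\<^sup>2 + y\<^sup>2 = D"
      by (auto simp: power2_eq_square algebra_simps)
    with \<open>D < 1\<close> show ?thesis by (simp add: l cmod_def)
  next
    case True
    then have real_root: "x\<^sup>2 - T * x + D = 0" using re by simp
    have right: "(x - 1) * (x + 1 - T) = - (1 - T + D)"
      and left: "(x + 1) * (x - 1 - T) = - (1 + T + D)"
      using real_root by (simp_all add: power2_eq_square algebra_simps)
    have "\<not> 1 \<le> x"
    proof
      assume "1 \<le> x"
      then have "0 \<le> (x - 1) * (x + 1 - T)" using assms by simp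
      with right assms show False by simp
    qed
    moreover have "\<not> x \<le> -1"
    proof
      assume "x \<le> -1"
      then have "0 \<le> (x + 1) * (x - 1 - T)" using assms by (simp add: mult_nonpos_nonpos)
      with left assms show False by simp
    qed
    ultimately have "\<bar>x\<bar> < 1" by simp
    then show ?thesis by (simp add: l True cmod_def)
  qed
qed

lemma complex_monic_quadratic_splits:
  fixes T D :: complex
  obtains r\<^sub>1 r\<^sub>2 where "\<And>l. l\<^sup>2 - T * l + D = (l - r\<^sub>1) * (l - r\<^sub>2)"
proof
  define s where "s = csqrt (T\<^sup>2 - 4 * D)"
  have "s\<^sup>2 = T\<^sup>2 - 4 * D" by (simp add: s_def)
  then show "l\<^sup>2 - T * l + D = (l - (T + s) / 2) * (l - (T - s) / 2)" for l
    by (simp add: field_simps power2_eq_square)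
qed

lemma det_eq_0_iff_nontrivial_kernel:
  fixes M :: "'a::field^'n^'n"
  shows "det M = 0 \<longleftrightarrow> (\<exists>x. x \<noteq> 0 \<and> M *v x = 0)"
  using invertible_det_nz[of M]
  by (auto simp: invertible_left_inverse matrix_left_invertible_ker)

lemma matrix_vector_mult_mat: "mat c *v x = c *s x"
  by (simp add: vec_eq_iff mat_def matrix_vector_mult_def if_distrib if_distribR cong: if_cong)

definition eigenvalues :: "real^'n^'n \<Rightarrow> complex set" where
  "eigenvalues A = {l. \<exists>v. v \<noteq> 0 \<and> complexify A *v v = l *s v}"

lemma spectral_radius_eq_Max_eigenvalues:
  "spectral_radius A = Max (cmod ` eigenvalues A)"
  unfolding spectral_radius_def eigenvalues_def by (rule arg_cong[where f = Max]) blast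

lemma spectral_radius_less:
  assumes "finite (eigenvalues A)" "eigenvalues A \<noteq> {}" "\<And>l. l \<in> eigenvalues A \<Longrightarrow> cmod l < r"
  shows "spectral_radius A < r"
  using assms by (simp add: spectral_radius_eq_Max_eigenvalues)

lemma eigenvalues_eq_det_zero:
  "eigenvalues A = {l. det (complexify A - mat l) = 0}"
  by (simp add: eigenvalues_def det_eq_0_iff_nontrivial_kernel
      matrix_vector_mult_diff_rdistrib matrix_vector_mult_mat)

lemma eigenvalues_2x2:
  fixes A :: "real^2^2"
  shows "eigenvalues A = {l. l\<^sup>2 - trace A * l + det A = 0}"
proof -
  have "det (complexify A - mat l) = l\<^sup>2 - trace A * l + det A" for l :: complex
    by (simp add: det_2 trace_def sum_2 complexify_def mat_def power2_eq_square algebra_simps)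
  then show ?thesis by (simp add: eigenvalues_eq_det_zero)
qed

theorem spectral_radius_2x2_less_1:
  fixes A :: "real^2^2"
  assumes "det A < 1" and "\<bar>trace A\<bar> < 1 + det A"
  shows "spectral_radius A < 1"
proof (rule spectral_radius_less)
  obtain r\<^sub>1 r\<^sub>2 where split: "\<And>l :: complex. l\<^sup>2 - trace A * l + det A = (l - r\<^sub>1) * (l - r\<^sub>2)"
    using complex_monic_quadratic_splits[of "of_real (trace A)" "of_real (det A)"] by blast
  have "eigenvalues A = {r\<^sub>1, r\<^sub>2}"
    unfolding eigenvalues_2x2 split by auto
  then show "finite (eigenvalues A)" "eigenvalues A \<noteq> {}" by auto
  show "cmod l < 1" if "l \<in> eigenvalues A" for l
    using that by (intro quadratic_root_in_unit_disc[OF _ assms]) (simp add: eigenvalues_2x2)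
qed

lemma induced_2norm_nonneg: "0 \<le> induced_2norm U"
  unfolding induced_2norm_def
  by (intro onorm_pos_le) (simp add: matrix_vector_mul_bounded_linear)

theorem proposition2:
  fixes sf so sx alpha :: real and Uo :: "real^'n^'n"
  assumes "0 < sf" "sf < 1" "0 < so" "so < 1" "0 < sx" "sx < 1" "0 \<le> alpha"
    and "-1 + sf + alpha * so + 1/4 * sx * induced_2norm Uo < 1/4 * sf * sx * induced_2norm Uo"
    and "1/4 * sf * sx * induced_2norm Uo < 1"
  shows "spectral_radius
           (vector [vector [sf, alpha],
                    vector [so * sf, alpha * so + 1/4 * sx * induced_2norm Uo]] :: real^2^2) < 1"
proof (rule spectral_radius_2x2_less_1)
  let ?k = "1/4 * sx * induced_2norm Uo"
  let ?A = "vector [vector [sf, alpha], vector [so * sf, alpha * so + ?k]] :: real^2^2"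
  have "0 \<le> ?k"
    using \<open>0 < sx\<close> induced_2norm_nonneg[of Uo] by simp
  have det: "det ?A = sf * ?k" and trace: "trace ?A = sf + alpha * so + ?k"
    by (simp_all add: det_2 trace_def sum_2 algebra_simps)
  show "det ?A < 1"
    unfolding det using assms(9) by simp
  have "0 \<le> trace ?A"
    unfolding trace using assms(1,3,7) \<open>0 \<le> ?k\<close> by simp
  then show "\<bar>trace ?A\<bar> < 1 + det ?A"
    unfolding det trace using assms(8) by linarith
qed

end
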